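(* Fix an integer $p \ge 2$ and positive reals $U_1,\dots,U_p > 0$, and a density $Q = 1/m$ with $m$ a positive integer, $1 \le m \le p-1$. Consider spinless fermion occupation configurations $(n_i)_{i\in\mathbb{Z}}$, $n_i\in\{0,1\}$, on the infinite one-dimensional lattice that are periodic with some period $L$ (i.e. $n_{i+L}=n_i$) and have $N = QL$ occupied sites per period. The energy density of such a configuration is $$\varepsilon = \frac{1}{L}\sum_{i=1}^{L}\sum_{k=1}^{p} U_k\, n_i\, n_{i+k}.$$ A ground state is a periodic configuration of density $Q$ whose energy density is minimal among all periodic configurations of density $Q$ (of any period). Then in any ground state, the number of empty sites between any two consecutive occupied sites (the "space" between them) is at most $p$.
   Context: This is the atomic limit ($t=0$) of the generalised $t$-$V$ model with Hamiltonian $H=\sum_i\sum_{m=1}^p U_m n_i n_{i+m}$, with repulsive interactions of maximal range $p$ (no convexity assumption on the $U_m$), at a critical (commensurate) density $Q=1/m$. A periodic system of $L$ sites is regarded as an infinite system with a unit cell of $L$ sites, and energies are compared via energy per site. *)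

theory Defs
  imports Main "HOL.Real"
begin

text \<open>Occupation configurations on the infinite lattice Z: c i = True iff site i is occupied.\<close>

definition periodic_config :: "(int \<Rightarrow> bool) \<Rightarrow> nat \<Rightarrow> bool" where
  "periodic_config c L \<longleftrightarrow> L > 0 \<and> (\<forall>i. c (i + int L) = c i)"

definition occ_count :: "(int \<Rightarrow> bool) \<Rightarrow> nat \<Rightarrow> nat" where
  "occ_count c L = card {i \<in> {1..int L}. c i}"

text \<open>c is periodic with period L and has density Q = 1/m, i.e. N = L/m occupied sites per period.\<close>
definition has_density :: "(int \<Rightarrow> bool) \<Rightarrow> nat \<Rightarrow> nat \<Rightarrow> bool" where
  "has_density c L m \<longleftrightarrow> periodic_config c L \<and> m * occ_count c L = L"

definition energy_density :: "(nat \<Rightarrow> real) \<Rightarrow> nat \<Rightarrow> (int \<Rightarrow> bool) \<Rightarrow> nat \<Rightarrow> real" where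
  "energy_density U p c L =
     (1 / real L) * (\<Sum>i\<in>{1..int L}. \<Sum>k\<in>{1..p}.
        U k * of_bool (c i) * of_bool (c (i + int k)))"

definition ground_state :: "(nat \<Rightarrow> real) \<Rightarrow> nat \<Rightarrow> nat \<Rightarrow> (int \<Rightarrow> bool) \<Rightarrow> bool" where
  "ground_state U p m c \<longleftrightarrow>
     (\<exists>L. has_density c L m \<and>
        (\<forall>c' L'. has_density c' L' m \<longrightarrow> energy_density U p c L \<le> energy_density U p c' L'))"

end

theory Submission
  imports Defs
begin

text \<open>Suppose a ground state c of period L had more than p empty sites in a row, ending at an
  occupied site j. Since only pairs at distance at most p interact, deleting one of these empty
  sites from every period does not change the energy per period E > 0. Take a = p + 1 - m
  copies of the shortened period and append the block 1 0\<dots>0 of length p + 1: the result has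
  period a L + m, contains a N + 1 particles (so its density is still 1/m) and has energy a E per
  period. Its energy density a E / (a L + m) is strictly smaller than E / L, a contradiction.
  Positivity of E holds because a configuration without interactions has density at most
  1/(p + 1) < 1/m.\<close>

section \<open>Sums over windows of the lattice\<close>

definition window_sum :: "(int \<Rightarrow> 'a::comm_monoid_add) \<Rightarrow> int \<Rightarrow> nat \<Rightarrow> 'a" where
  "window_sum f a n = (\<Sum>x\<in>{a..<a + int n}. f x)"

lemma window_sum_0 [simp]: "window_sum f a 0 = 0"
  by (simp add: window_sum_def)

lemma window_sum_add: "window_sum f a (m + n) = window_sum f a m + window_sum f (a + int m) n"
proof -
  have "{a..<a + int (m + n)} = {a..<a + int m} \<union> {a + int m..<a + int m + int n}" by auto
  then show ?thesis
    unfolding window_sum_def by (simp add: sum.union_disjoint add.assoc)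
qed

lemma window_sum_Suc: "window_sum f a (Suc n) = window_sum f a n + f (a + int n)"
proof -
  have "{a + int n..<a + int n + 1} = {a + int n}" by auto
  then show ?thesis
    using window_sum_add[of f a n 1] by (simp add: window_sum_def)
qed

lemma window_sum_cong:
  "(\<And>x. a \<le> x \<Longrightarrow> x < a + int n \<Longrightarrow> f x = g x) \<Longrightarrow> window_sum f a n = window_sum g a n"
  unfolding window_sum_def by (rule sum.cong) auto

lemma window_sum_shift: "window_sum (\<lambda>x. f (x + d)) a n = window_sum f (a + d) n"
  unfolding window_sum_def
  by (rule sum.reindex_bij_witness[of _ "\<lambda>x. x - d" "\<lambda>x. x + d"]) auto

lemma window_sum_mult:
  "window_sum f a (k * n) = (\<Sum>i<k. window_sum f (a + int (i * n)) n)"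
proof (induction k)
  case (Suc k)
  then show ?case
    using window_sum_add[of f a "k * n" n] by (simp add: add.commute)
qed simp

lemma periodic_add_multiple:
  assumes "\<And>x. f (x + int n) = f x"
  shows "f (x + k * int n) = f x"
proof (induction k rule: int_induct[where k = 0])
  case (step1 k)
  then show ?case using assms[of "x + k * int n"] by (simp add: algebra_simps)
next
  case (step2 k)
  then show ?case using assms[of "x + (k - 1) * int n"] by (simp add: algebra_simps)
qed simp

lemma periodic_mod:
  assumes "\<And>x. f (x + int n) = f x"
  shows "f (x mod int n) = f x"
  using periodic_add_multiple[where f = f, OF assms, of x "- (x div int n)"] by (simp add: minus_div_mult_eq_mod)

lemma window_sum_periodic_start:
  fixes f :: "int \<Rightarrow> 'a::cancel_comm_monoid_add"
  assumes "\<And>x. f (x + int n) = f x"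
  shows "window_sum f a n = window_sum f b n"
proof -
  have step: "window_sum f (a + 1) n = window_sum f a n" for a
  proof -
    have "f a + window_sum f (a + 1) n = window_sum f a (Suc n)"
      using window_sum_add[of f a 1 n] window_sum_Suc[of f a 0] by simp
    also have "\<dots> = window_sum f a n + f a"
      using window_sum_Suc[of f a n] assms[of a] by simp
    finally show ?thesis by (simp add: add.commute)
  qed
  have "window_sum f a n = window_sum f 0 n" for a
  proof (induction a rule: int_induct[where k = 0])
    case (step2 a)
    then show ?case using step[of "a - 1"] by simp
  qed (use step in simp_all)
  then show ?thesis by metis
qed

lemma window_sum_periodic_mult:
  fixes f :: "int \<Rightarrow> 'a::semiring_1_cancel"
  assumes "\<And>x. f (x + int n) = f x"
  shows "window_sum f a (k * n) = of_nat k * window_sum f a n"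
proof -
  have "window_sum f a (k * n) = (\<Sum>i<k. window_sum f a n)"
    unfolding window_sum_mult
    by (intro sum.cong refl window_sum_periodic_start[where f = f, OF assms])
  then show ?thesis by simp
qed

definition site_energy :: "(nat \<Rightarrow> real) \<Rightarrow> nat \<Rightarrow> (int \<Rightarrow> bool) \<Rightarrow> int \<Rightarrow> real" where
  "site_energy U p c x = (\<Sum>k\<in>{1..p}. U k * of_bool (c x) * of_bool (c (x + int k)))"

definition period_energy :: "(nat \<Rightarrow> real) \<Rightarrow> nat \<Rightarrow> (int \<Rightarrow> bool) \<Rightarrow> nat \<Rightarrow> real" where
  "period_energy U p c L = window_sum (site_energy U p c) 0 L"

definition occupation :: "(int \<Rightarrow> bool) \<Rightarrow> nat \<Rightarrow> real" where
  "occupation c L = window_sum (\<lambda>x. of_bool (c x)) 0 L"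

lemma periodic_config_minus:
  assumes "periodic_config c L"
  shows "c (x - int L) = c x"
  using assms unfolding periodic_config_def by (metis diff_add_cancel)

lemma site_energy_cong:
  assumes "c' x' = c x" and "\<And>k. c x \<Longrightarrow> k \<in> {1..p} \<Longrightarrow> c' (x' + int k) = c (x + int k)"
  shows "site_energy U p c' x' = site_energy U p c x"
  unfolding site_energy_def using assms by (cases "c x") (auto intro: sum.cong)

lemma site_energy_nonneg:
  assumes "\<forall>k\<in>{1..p}. U k > 0"
  shows "site_energy U p c x \<ge> 0"
  unfolding site_energy_def using assms by (intro sum_nonneg) (auto intro: less_imp_le)

lemma site_energy_eq_0_iff:
  assumes "\<forall>k\<in>{1..p}. U k > 0"
  shows "site_energy U p c x = 0 \<longleftrightarrow> (c x \<longrightarrow> (\<forall>k\<in>{1..p}. \<not> c (x + int k)))"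
  unfolding site_energy_def using assms
  by (subst sum_nonneg_eq_0_iff) (fastforce intro: less_imp_le)+

lemma site_energy_periodic:
  assumes "periodic_config c L"
  shows "site_energy U p c (x + int L) = site_energy U p c x"
proof -
  have "c (y + int L) = c y" for y
    using assms unfolding periodic_config_def by blast
  moreover have "x + int L + int k = x + int k + int L" for k
    by simp
  ultimately show ?thesis
    by (intro site_energy_cong) metis+
qed

lemma window_sum_from_1:
  fixes f :: "int \<Rightarrow> 'a::cancel_comm_monoid_add"
  assumes "\<And>x. f (x + int L) = f x"
  shows "(\<Sum>i\<in>{1..int L}. f i) = window_sum f 0 L"
proof -
  have "{1..int L} = {1..<1 + int L}" by auto
  then show ?thesis
    using window_sum_periodic_start[where f = f, OF assms, of 1 0] by (simp add: window_sum_def)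
qed

lemma energy_density_eq:
  assumes "periodic_config c L"
  shows "energy_density U p c L = period_energy U p c L / real L"
  unfolding energy_density_def period_energy_def
  using window_sum_from_1[of "site_energy U p c", OF site_energy_periodic[OF assms]]
  by (simp add: site_energy_def)

lemma occ_count_eq_occupation:
  assumes "periodic_config c L"
  shows "real (occ_count c L) = occupation c L"
proof -
  have "c (x + int L) = c x" for x
    using assms unfolding periodic_config_def by blast
  then have "(\<Sum>i\<in>{1..int L}. of_bool (c i) :: real) = occupation c L"
    unfolding occupation_def by (intro window_sum_from_1) simp
  moreover have "{i \<in> {1..int L}. c i} = {1..int L} \<inter> {i. c i}" by auto
  ultimately show ?thesis
    unfolding occ_count_def by simp
qed

lemma window_occupation_le_1:
  assumes sparse: "\<And>x k. c x \<Longrightarrow> k \<in> {1..p} \<Longrightarrow> \<not> c (x + int k)"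
  shows "window_sum (\<lambda>x. of_bool (c x)) a (Suc p) \<le> (1::real)"
proof -
  let ?A = "{a..<a + int (Suc p)} \<inter> {x. c x}"
  have not_less: "\<not> x < y" if "x \<in> ?A" "y \<in> ?A" for x y
  proof
    assume "x < y"
    then have "nat (y - x) \<in> {1..p}" using that by auto
    then show False using sparse[of x "nat (y - x)"] that \<open>x < y\<close> by simp
  qed
  have "card ?A \<le> 1"
    using card_le_Suc0_iff_eq[of ?A] not_less
    by (metis One_nat_def finite_Int finite_atLeastLessThan_int linorder_neqE)
  then show ?thesis
    unfolding window_sum_def by simp
qed

lemma sparse_occupation_bound:
  assumes "periodic_config c L"
    and sparse: "\<And>x k. c x \<Longrightarrow> k \<in> {1..p} \<Longrightarrow> \<not> c (x + int k)"
  shows "real (Suc p) * occupation c L \<le> real L"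
proof -
  have per: "of_bool (c (x + int L)) = (of_bool (c x) :: real)" for x
    using assms(1) unfolding periodic_config_def by simp
  have "real (Suc p) * occupation c L = window_sum (\<lambda>x. of_bool (c x)) 0 (L * Suc p)"
    unfolding occupation_def
    using window_sum_periodic_mult[where f = "\<lambda>x. of_bool (c x)", OF per, of 0 "Suc p"]
    by (simp add: mult.commute)
  also have "\<dots> = (\<Sum>i<L. window_sum (\<lambda>x. of_bool (c x)) (int (i * Suc p)) (Suc p))"
    using window_sum_mult[of _ 0 L "Suc p"] by simp
  also have "\<dots> \<le> (\<Sum>i<L. 1)"
    by (intro sum_mono window_occupation_le_1 sparse) auto
  finally show ?thesis by simp
qed

lemma period_energy_pos:
  assumes U: "\<forall>k\<in>{1..p}. U k > 0"
    and density: "has_density c L m" and "m \<le> p"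
  shows "period_energy U p c L > 0"
proof (rule ccontr)
  have per: "periodic_config c L" and count: "m * occ_count c L = L"
    using density unfolding has_density_def by blast+
  then have "L > 0"
    unfolding periodic_config_def by blast
  assume "\<not> period_energy U p c L > 0"
  moreover have "period_energy U p c L \<ge> 0"
    unfolding period_energy_def window_sum_def by (intro sum_nonneg site_energy_nonneg[OF U])
  ultimately have "period_energy U p c L = 0" by simp
  then have zero_in_period: "site_energy U p c x = 0" if "0 \<le> x" "x < int L" for x
    using that unfolding period_energy_def window_sum_def
    by (subst (asm) sum_nonneg_eq_0_iff) (auto intro: site_energy_nonneg[OF U])
  have "site_energy U p c x = 0" for x
    using zero_in_period[of "x mod int L"] \<open>L > 0\<close>
      periodic_mod[where f = "site_energy U p c", OF site_energy_periodic[OF per]]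
    by simp
  then have "\<not> c (x + int k)" if "c x" "k \<in> {1..p}" for x k
    using that site_energy_eq_0_iff[OF U] by blast
  then have "real (Suc p) * real (occ_count c L) \<le> real (m * occ_count c L)"
    using sparse_occupation_bound[OF per] occ_count_eq_occupation[OF per] count by simp
  then have "Suc p * occ_count c L \<le> m * occ_count c L"
    by (simp only: of_nat_mult [symmetric] of_nat_le_iff)
  moreover have "occ_count c L > 0"
    using count \<open>L > 0\<close> by (metis gr0I mult_0_right)
  ultimately have "Suc p \<le> m"
    using mult_le_cancel2 by blast
  then show False
    using \<open>m \<le> p\<close> by simp
qed

section \<open>Cutting and gluing configurations\<close>

definition glue :: "(int \<Rightarrow> bool) \<Rightarrow> nat \<Rightarrow> (int \<Rightarrow> bool) \<Rightarrow> nat \<Rightarrow> int \<Rightarrow> bool" where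
  "glue c P d Q y =
     (let r = y mod int (P + Q) in if r < int P then c r else d (r - int P))"

lemma glue_left: "0 \<le> r \<Longrightarrow> r < int P \<Longrightarrow> glue c P d Q r = c r"
  unfolding glue_def by simp

lemma glue_right: "0 \<le> r \<Longrightarrow> r < int Q \<Longrightarrow> glue c P d Q (int P + r) = d r"
  unfolding glue_def by simp

lemma periodic_config_glue: "P + Q > 0 \<Longrightarrow> periodic_config (glue c P d Q) (P + Q)"
  unfolding periodic_config_def glue_def by simp

lemma period_energy_glue:
  assumes c_tail: "\<And>r. int P - int p \<le> r \<Longrightarrow> r < int P \<Longrightarrow> \<not> c r"
    and d_tail: "\<And>r. int Q - int p \<le> r \<Longrightarrow> r < int Q \<Longrightarrow> \<not> d r"
  shows "period_energy U p (glue c P d Q) (P + Q) = period_energy U p c P + period_energy U p d Q"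
proof -
  let ?g = "glue c P d Q"
  have left: "site_energy U p ?g y = site_energy U p c y" if "0 \<le> y" "y < int P" for y
  proof (rule site_energy_cong)
    show "?g y = c y" using that by (rule glue_left)
    fix k assume "c y" "k \<in> {1..p}"
    then have "y + int k < int P" using c_tail[of y] that by force
    then show "?g (y + int k) = c (y + int k)" using that by (intro glue_left) auto
  qed
  have right: "site_energy U p ?g (y + int P) = site_energy U p d y" if "0 \<le> y" "y < int Q" for y
  proof (rule site_energy_cong)
    show "?g (y + int P) = d y" using glue_right[OF that] by (simp add: add.commute)
    fix k assume "d y" "k \<in> {1..p}"
    then have "y + int k < int Q" using d_tail[of y] that by force
    then show "?g (y + int P + int k) = d (y + int k)"
      using glue_right[of "y + int k"] that by (simp add: ac_simps)
  qed
  have "period_energy U p ?g (P + Q) =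
      window_sum (site_energy U p ?g) 0 P + window_sum (\<lambda>y. site_energy U p ?g (y + int P)) 0 Q"
    unfolding period_energy_def window_sum_add window_sum_shift by simp
  also have "\<dots> = period_energy U p c P + period_energy U p d Q"
    unfolding period_energy_def using left right by (simp cong: window_sum_cong)
  finally show ?thesis .
qed

lemma occupation_glue:
  "occupation (glue c P d Q) (P + Q) = occupation c P + occupation d Q"
proof -
  have "occupation (glue c P d Q) (P + Q) =
      window_sum (\<lambda>y. of_bool (glue c P d Q y)) 0 P
      + window_sum (\<lambda>y. of_bool (glue c P d Q (y + int P))) 0 Q"
    unfolding occupation_def window_sum_add
      window_sum_shift[of "\<lambda>y. of_bool (glue c P d Q y)"] by simp
  also have "\<dots> = occupation c P + occupation d Q"
    unfolding occupation_def
    using glue_left[of _ P c d Q] glue_right[of _ Q c P d]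
    by (simp add: add.commute cong: window_sum_cong)
  finally show ?thesis .
qed

text \<open>If c has period M + 1, then repeat_window c j M deletes the site j + M, which is
  congruent to j - 1, from every period.\<close>

definition repeat_window :: "(int \<Rightarrow> bool) \<Rightarrow> int \<Rightarrow> nat \<Rightarrow> int \<Rightarrow> bool" where
  "repeat_window c j M y = c (y mod int M + j)"

lemma repeat_window_periodic: "repeat_window c j M (y + int M) = repeat_window c j M y"
  unfolding repeat_window_def by simp

lemma repeat_window_eq: "0 \<le> y \<Longrightarrow> y < int M \<Longrightarrow> repeat_window c j M y = c (y + j)"
  unfolding repeat_window_def by simp

lemma repeat_window_occupied:
  assumes per: "periodic_config c (Suc M)" and "M > 0"
    and gap: "\<And>r. j - int p - 1 \<le> r \<Longrightarrow> r < j \<Longrightarrow> \<not> c r"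
    and occupied: "repeat_window c j M y"
  shows "y mod int M + int p < int M"
proof (rule ccontr)
  let ?r = "y mod int M"
  assume "\<not> ?r + int p < int M"
  moreover have "?r < int M" using \<open>M > 0\<close> by simp
  ultimately have "\<not> c (?r + j - int (Suc M))" by (intro gap) auto
  then show False
    using occupied periodic_config_minus[OF per, of "?r + j"]
    unfolding repeat_window_def by simp
qed

lemma repeat_window_tail:
  assumes per: "periodic_config c (Suc M)" and "p < M"
    and gap: "\<And>r. j - int p - 1 \<le> r \<Longrightarrow> r < j \<Longrightarrow> \<not> c r"
    and "int (a * M) - int p \<le> r" "r < int (a * M)"
  shows "\<not> repeat_window c j M r"
proof
  assume "repeat_window c j M r"
  then have "r mod int M + int p < int M"
    using repeat_window_occupied[OF per _ gap] \<open>p < M\<close> by simp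
  moreover have "r mod int M = r - (int a - 1) * int M"
  proof -
    have "r mod int M = (r - (int a - 1) * int M) mod int M"
      by (metis mod_mult_self1 diff_add_cancel)
    also have "\<dots> = r - (int a - 1) * int M"
      using assms(4,5) \<open>p < M\<close> by (intro mod_pos_pos_trivial) (auto simp: algebra_simps)
    finally show ?thesis .
  qed
  ultimately show False
    using assms(4) by (simp add: algebra_simps)
qed

lemma period_energy_repeat_window:
  assumes per: "periodic_config c (Suc M)" and "M > 0"
    and gap: "\<And>r. j - int p - 1 \<le> r \<Longrightarrow> r < j \<Longrightarrow> \<not> c r"
  shows "period_energy U p (repeat_window c j M) M = period_energy U p c (Suc M)"
proof -
  let ?w = "repeat_window c j M"
  have "\<not> c (j + int M)"
    using gap[of "j - 1"] periodic_config_minus[OF per, of "j + int M"] by simp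
  then have last: "site_energy U p c (j + int M) = 0"
    unfolding site_energy_def by simp
  have inner: "site_energy U p ?w y = site_energy U p c (y + j)" if "0 \<le> y" "y < int M" for y
  proof (rule site_energy_cong)
    show "?w y = c (y + j)" using that by (rule repeat_window_eq)
    fix k assume "c (y + j)" "k \<in> {1..p}"
    then have "y + int k < int M"
      using repeat_window_occupied[where j = j and p = p, OF per \<open>M > 0\<close> gap, of y]
        repeat_window_eq[of y M c j] that by simp
    then show "?w (y + int k) = c (y + j + int k)"
      using that repeat_window_eq[of "y + int k" M c j] by (simp add: ac_simps)
  qed
  have "period_energy U p c (Suc M) = window_sum (site_energy U p c) j (Suc M)"
    unfolding period_energy_def
    by (rule window_sum_periodic_start[where f = "site_energy U p c", OF site_energy_periodic[OF per]])
  also have "\<dots> = window_sum (\<lambda>y. site_energy U p c (y + j)) 0 M"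
    using last by (simp add: window_sum_Suc window_sum_shift)
  also have "\<dots> = period_energy U p ?w M"
    unfolding period_energy_def using inner by (simp cong: window_sum_cong)
  finally show ?thesis by simp
qed

lemma occupation_repeat_window:
  assumes per: "periodic_config c (Suc M)" and "\<not> c (j - 1)"
  shows "occupation (repeat_window c j M) M = occupation c (Suc M)"
proof -
  have c_per: "of_bool (c (x + int (Suc M))) = (of_bool (c x) :: real)" for x
    using per unfolding periodic_config_def by simp
  have "\<not> c (j + int M)"
    using assms periodic_config_minus[OF per, of "j + int M"] by simp
  have "occupation c (Suc M) = window_sum (\<lambda>x. of_bool (c x)) j (Suc M)"
    unfolding occupation_def by (rule window_sum_periodic_start[where f = "\<lambda>x. of_bool (c x)", OF c_per])
  also have "\<dots> = window_sum (\<lambda>y. of_bool (c (y + j))) 0 M"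
    using \<open>\<not> c (j + int M)\<close> window_sum_shift[of "\<lambda>x. of_bool (c x) :: real" j 0 M]
    by (simp add: window_sum_Suc)
  also have "\<dots> = occupation (repeat_window c j M) M"
    unfolding occupation_def by (simp add: repeat_window_eq cong: window_sum_cong)
  finally show ?thesis by simp
qed

lemma period_energy_repeat_window_mult:
  assumes per: "periodic_config c (Suc M)" and "M > 0"
    and gap: "\<And>r. j - int p - 1 \<le> r \<Longrightarrow> r < j \<Longrightarrow> \<not> c r"
  shows "period_energy U p (repeat_window c j M) (a * M) = real a * period_energy U p c (Suc M)"
proof -
  have "periodic_config (repeat_window c j M) M"
    using \<open>M > 0\<close> repeat_window_periodic unfolding periodic_config_def by blast
  then have "period_energy U p (repeat_window c j M) (a * M)
      = real a * period_energy U p (repeat_window c j M) M"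
    unfolding period_energy_def
    by (intro window_sum_periodic_mult site_energy_periodic)
  then show ?thesis
    using period_energy_repeat_window[OF assms] by simp
qed

lemma occupation_repeat_window_mult:
  assumes per: "periodic_config c (Suc M)" and "\<not> c (j - 1)"
  shows "occupation (repeat_window c j M) (a * M) = real a * occupation c (Suc M)"
  using window_sum_periodic_mult[where f = "\<lambda>y. of_bool (repeat_window c j M y) :: real", of M 0 a]
    occupation_repeat_window[OF assms] repeat_window_periodic
  by (simp add: occupation_def)

lemma period_energy_append_isolated:
  assumes tail: "\<And>r. int P - int p \<le> r \<Longrightarrow> r < int P \<Longrightarrow> \<not> c r"
  shows "period_energy U p (glue c P (\<lambda>y. y = 0) (Suc p)) (P + Suc p) = period_energy U p c P"
proof -
  have "site_energy U p (\<lambda>y. y = 0) y = 0" for y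
    unfolding site_energy_def by (auto intro: sum.neutral)
  then have "period_energy U p (\<lambda>y. y = 0) (Suc p) = 0"
    unfolding period_energy_def window_sum_def by simp
  moreover have "period_energy U p (glue c P (\<lambda>y. y = 0) (Suc p)) (P + Suc p)
      = period_energy U p c P + period_energy U p (\<lambda>y. y = 0) (Suc p)"
    by (rule period_energy_glue[OF tail]) auto
  ultimately show ?thesis by simp
qed

lemma occupation_append_isolated:
  "occupation (glue c P (\<lambda>y. y = 0) (Suc p)) (P + Suc p) = occupation c P + 1"
proof -
  have "{0..<int (Suc p)} \<inter> {y. y = 0} = {0}" by auto
  then have "occupation (\<lambda>y. y = 0) (Suc p) = 1"
    unfolding occupation_def window_sum_def by simp
  then show ?thesis
    using occupation_glue[of c P "\<lambda>y. y = 0" "Suc p"] by simp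
qed

lemma repeat_window_append_isolated:
  fixes a :: nat
  assumes per: "periodic_config c (Suc M)" and "p < M"
    and gap: "\<And>r. j - int p - 1 \<le> r \<Longrightarrow> r < j \<Longrightarrow> \<not> c r"
  defines "c' \<equiv> glue (repeat_window c j M) (a * M) (\<lambda>y. y = 0) (Suc p)"
  shows "periodic_config c' (a * M + Suc p)"
    and "period_energy U p c' (a * M + Suc p) = real a * period_energy U p c (Suc M)"
    and "occupation c' (a * M + Suc p) = real a * occupation c (Suc M) + 1"
proof -
  have tail: "\<And>r. int (a * M) - int p \<le> r \<Longrightarrow> r < int (a * M) \<Longrightarrow> \<not> repeat_window c j M r"
    using repeat_window_tail[OF per \<open>p < M\<close> gap] by blast
  show "periodic_config c' (a * M + Suc p)"
    unfolding c'_def by (rule periodic_config_glue) simp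
  show "period_energy U p c' (a * M + Suc p) = real a * period_energy U p c (Suc M)"
    unfolding c'_def
    using period_energy_append_isolated[where c = "repeat_window c j M" and P = "a * M" and p = p,
        OF tail]
      period_energy_repeat_window_mult[where j = j and p = p, OF per _ gap] \<open>p < M\<close>
    by simp
  show "occupation c' (a * M + Suc p) = real a * occupation c (Suc M) + 1"
    unfolding c'_def
    using occupation_append_isolated occupation_repeat_window_mult[OF per] gap[of "j - 1"]
    by simp
qed

lemma period_gt_gap:
  assumes "periodic_config c L" and "c j"
    and gap: "\<And>r. j - int p - 1 \<le> r \<Longrightarrow> r < j \<Longrightarrow> \<not> c r"
  shows "Suc p < L"
proof -
  have "\<not> (j - int p - 1 \<le> j - int L)"
    using gap[of "j - int L"] periodic_config_minus[OF assms(1), of j] assms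
    unfolding periodic_config_def by force
  then show ?thesis
    by linarith
qed

lemma mult_divide_add_less:
  fixes a L m :: nat and E :: real
  assumes "0 < E" "0 < L" "0 < m"
  shows "real a * E / real (a * L + m) < E / real L"
proof -
  have "real a * E * real L < E * real (a * L + m)"
    using assms by (simp add: algebra_simps)
  then show ?thesis
    using assms by (simp add: divide_simps ac_simps add_pos_nonneg)
qed

lemma exists_lower_energy_density:
  assumes U: "\<forall>k\<in>{1..p}. U k > 0"
    and density: "has_density c L m" and "m \<le> p"
    and "c j" and gap: "\<And>r. j - int p - 1 \<le> r \<Longrightarrow> r < j \<Longrightarrow> \<not> c r"
  shows "\<exists>c' L'. has_density c' L' m \<and> energy_density U p c' L' < energy_density U p c L"
proof -
  have per: "periodic_config c L" and count: "m * occ_count c L = L"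
    using density unfolding has_density_def by blast+
  obtain M where L: "L = Suc M" and "p < M"
    using period_gt_gap[OF per \<open>c j\<close> gap] by (cases L) auto
  define a where "a = Suc p - m"
  \<comment> \<open>a (M + 1) + m = a M + p + 1: the a deleted sites and m extra ones make room for the
    block 1 0\<dots>0, and the density stays 1/m.\<close>
  define c' where "c' = glue (repeat_window c j M) (a * M) (\<lambda>y. y = 0) (Suc p)"
  define L' where "L' = a * M + Suc p"
  note c' = repeat_window_append_isolated[where j = j and p = p and a = a,
      OF per[unfolded L] \<open>p < M\<close> gap, folded c'_def L'_def L]
  have L': "L' = a * L + m"
    unfolding L'_def L a_def using \<open>m \<le> p\<close> by simp
  have "real (occ_count c' L') = real (a * occ_count c L + 1)"
    using c'(3) occ_count_eq_occupation[OF per] occ_count_eq_occupation[OF c'(1)] by simp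
  then have "occ_count c' L' = a * occ_count c L + 1"
    by (simp only: of_nat_eq_iff)
  then have density': "has_density c' L' m"
    using c'(1) count L' unfolding has_density_def by (simp add: algebra_simps)
  have "0 < m"
    using count L by (metis gr0I mult_0 zero_less_Suc)
  then have "real a * period_energy U p c L / real L' < period_energy U p c L / real L"
    unfolding L' using period_energy_pos[OF U density \<open>m \<le> p\<close>] L
    by (intro mult_divide_add_less) simp_all
  then have "energy_density U p c' L' < energy_density U p c L"
    using energy_density_eq[OF per] energy_density_eq[OF c'(1)] c'(2) by simp
  then show ?thesis
    using density' by blast
qed

theorem theorem2:
  fixes U :: "nat \<Rightarrow> real" and p m :: nat and c :: "int \<Rightarrow> bool" and i j :: int
  assumes "p \<ge> 2"
    and "\<forall>k\<in>{1..p}. U k > 0"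
    and "1 \<le> m" and "m \<le> p - 1"
    and "ground_state U p m c"
    and "i < j" and "c i" and "c j"
    and "\<forall>l. i < l \<and> l < j \<longrightarrow> \<not> c l"
  shows "j - i - 1 \<le> int p"
proof (rule ccontr)
  assume "\<not> j - i - 1 \<le> int p"
  then have gap: "\<not> c r" if "j - int p - 1 \<le> r" "r < j" for r
    using assms(9) that by auto
  obtain L where density: "has_density c L m"
    and minimal: "\<And>c' L'. has_density c' L' m \<Longrightarrow> energy_density U p c L \<le> energy_density U p c' L'"
    using assms(5) unfolding ground_state_def by blast
  have "m \<le> p"
    using assms(4) by simp
  from exists_lower_energy_density[OF assms(2) density this \<open>c j\<close> gap]
  show False
    using minimal not_le by blast
qed

end
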